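(* Let $\pi$ be a propositional formula that is neither a tautology nor a contradiction. Then the formula $[\ddagger\pi](\Box\lnot\pi \lor \Box\pi) \leftrightarrow \Box\bot$ is valid, i.e. true at every world of every model.
   Context: Fix a countable non-empty set $\mathit{At}$ of atoms. Formulas are built from $\top$, atoms $p\in\mathit{At}$, $\lnot$, $\land$, $\Box$ and, for each propositional formula $\pi$, the operator $[\ddagger\pi]$ (read "after the agent forgets whether $\pi$"); $\bot,\lor,\to,\leftrightarrow$ are defined as usual and $\Diamond\varphi := \lnot\Box\lnot\varphi$, $\langle\ddagger\pi\rangle\varphi:=\lnot[\ddagger\pi]\lnot\varphi$. A model is $\mathcal{M}=\langle W,R,V\rangle$ with $W\neq\varnothing$, $R\subseteq W\times W$ arbitrary, $V:\mathit{At}\to\mathcal{P}(W)$; $\mathcal{M},w\models p$ iff $w\in V(p)$, Boolean clauses as usual, and $\mathcal{M},w\models\Box\varphi$ iff $\mathcal{M},v\models\varphi$ for all $v$ with $wRv$. Clauses: a literal is an atom or its negation; a clause is a finite set $D$ of literals read as $\bigvee D$ ($\bigvee\varnothing:=\bot$); it is tautological if it contains both $p$ and $\lnot p$ for some $p$. For propositional $\pi$, $\mathcal{C}(\pi)$ is the set of all non-tautological clauses $D$ with $\models\pi\to\bigvee D$ such that no proper subset $D'\subsetneq D$ satisfies $\models\pi\to\bigvee D'$. Model operation: for a model $\mathcal{M}$ and a finite family $(D_i)_{i\in I}$ of non-tautological clauses with $0\notin I$, $\mathcal{M}^{(D_i)_{i\in I}}_u=\langle W',R',V'\rangle$ has $W'=W\times(\{0\}\cup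 I)$, $(w,i)R'(v,j)$ iff $wRv$, $(w,0)\in V'(p)$ iff $w\in V(p)$, and for $i\in I$: $(w,i)\in V'(p)$ iff $\lnot p\in D_i$, or $\{p,\lnot p\}\cap D_i=\varnothing$ and $w\in V(p)$. Semantics of forgetting whether: $\mathcal{M},w\models[\ddagger\pi]\varphi$ iff for all $D_1\in\mathcal{C}(\pi)$ and all $D_2\in\mathcal{C}(\lnot\pi)$, $\mathcal{M}^{(D_1,D_2)}_u,(w,0)\models\varphi$ (family indexed by $I=\{1,2\}$). *)

theory Defs
  imports Main "HOL-Library.Countable"
begin

datatype 'a pform = PTop | PAtom 'a | PNeg "'a pform" | PConj "'a pform" "'a pform"

primrec peval :: "('a \<Rightarrow> bool) \<Rightarrow> 'a pform \<Rightarrow> bool" where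
  "peval v PTop = True"
| "peval v (PAtom p) = v p"
| "peval v (PNeg a) = (\<not> peval v a)"
| "peval v (PConj a b) = (peval v a \<and> peval v b)"

definition ptaut :: "'a pform \<Rightarrow> bool" where
  "ptaut \<pi> \<longleftrightarrow> (\<forall>v. peval v \<pi>)"

definition pcontra :: "'a pform \<Rightarrow> bool" where
  "pcontra \<pi> \<longleftrightarrow> (\<forall>v. \<not> peval v \<pi>)"

datatype 'a lit = Pos 'a | NegL 'a

primrec leval :: "('a \<Rightarrow> bool) \<Rightarrow> 'a lit \<Rightarrow> bool" where
  "leval v (Pos p) = v p"
| "leval v (NegL p) = (\<not> v p)"

definition ceval :: "('a \<Rightarrow> bool) \<Rightarrow> 'a lit set \<Rightarrow> bool" where
  "ceval v D \<longleftrightarrow> (\<exists>l\<in>D. leval v l)"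

definition tautological :: "'a lit set \<Rightarrow> bool" where
  "tautological D \<longleftrightarrow> (\<exists>p. Pos p \<in> D \<and> NegL p \<in> D)"

definition entails_clause :: "'a pform \<Rightarrow> 'a lit set \<Rightarrow> bool" where
  "entails_clause \<pi> D \<longleftrightarrow> (\<forall>v. peval v \<pi> \<longrightarrow> ceval v D)"

definition Cl :: "'a pform \<Rightarrow> 'a lit set set" where
  "Cl \<pi> = {D. finite D \<and> \<not> tautological D \<and> entails_clause \<pi> D \<and>
                 (\<forall>D'. D' \<subset> D \<longrightarrow> \<not> entails_clause \<pi> D')}"

datatype 'a fm = Top | Atom 'a | Neg "'a fm" | Conj "'a fm" "'a fm" | Box "'a fm"
  | Forget "'a pform" "'a fm"

primrec emb :: "'a pform \<Rightarrow> 'a fm" where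
  "emb PTop = Top"
| "emb (PAtom p) = Atom p"
| "emb (PNeg a) = Neg (emb a)"
| "emb (PConj a b) = Conj (emb a) (emb b)"

definition Bot :: "'a fm" where "Bot = Neg Top"
definition Or :: "'a fm \<Rightarrow> 'a fm \<Rightarrow> 'a fm" where "Or a b = Neg (Conj (Neg a) (Neg b))"
definition Imp :: "'a fm \<Rightarrow> 'a fm \<Rightarrow> 'a fm" where "Imp a b = Or (Neg a) b"
definition Iff :: "'a fm \<Rightarrow> 'a fm \<Rightarrow> 'a fm" where "Iff a b = Conj (Imp a b) (Imp b a)"

text \<open>Worlds have type 'w \<times> nat list: a world (w, i # is) of an updated model plays the role
  of the pair ((w,is), i) in the product W \<times> ({0} \<union> I) of the paper. Hence one
  fixed world type is closed under the model operation.\<close>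

record ('a, 'w) model =
  W :: "'w set"
  R :: "('w \<times> 'w) set"
  V :: "'a \<Rightarrow> 'w set"

definition wf_model :: "('a, 'w) model \<Rightarrow> bool" where
  "wf_model M \<longleftrightarrow> W M \<noteq> {} \<and> R M \<subseteq> W M \<times> W M \<and> (\<forall>p. V M p \<subseteq> W M)"

type_synonym ('a, 'w) emodel = "('a, 'w \<times> nat list) model"

definition upd :: "('a, 'w) emodel \<Rightarrow> (nat \<Rightarrow> 'a lit set) \<Rightarrow> nat set \<Rightarrow> ('a, 'w) emodel" where
  "upd M D I =
    \<lparr> W = {(w, i # is) | w i is. (w, is) \<in> W M \<and> i \<in> insert 0 I},
      R = {((w, i # is), (v, j # js)) | w i is v j js.
             ((w, is), (v, js)) \<in> R M \<and> i \<in> insert 0 I \<and> j \<in> insert 0 I},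
      V = (\<lambda>p. {(w, i # is) | w i is. (w, is) \<in> W M \<and> i \<in> insert 0 I \<and>
               (if i = 0 then (w, is) \<in> V M p
                else (NegL p \<in> D i \<or> (Pos p \<notin> D i \<and> NegL p \<notin> D i \<and> (w, is) \<in> V M p)))}) \<rparr>"

primrec sat :: "('a, 'w) emodel \<Rightarrow> 'w \<times> nat list \<Rightarrow> 'a fm \<Rightarrow> bool" where
  "sat M x Top = True"
| "sat M x (Atom p) = (x \<in> V M p)"
| "sat M x (Neg a) = (\<not> sat M x a)"
| "sat M x (Conj a b) = (sat M x a \<and> sat M x b)"
| "sat M x (Box a) = (\<forall>y. (x, y) \<in> R M \<longrightarrow> sat M y a)"
| "sat M x (Forget \<pi> a) =
     (\<forall>D1\<in>Cl \<pi>. \<forall>D2\<in>Cl (PNeg \<pi>).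
        sat (upd M (\<lambda>i. if i = 1 then D1 else D2) {1, 2}) (fst x, 0 # snd x) a)"

definition valid :: "'a fm \<Rightarrow> 'w itself \<Rightarrow> bool" where
  "valid \<phi> _ \<longleftrightarrow> (\<forall>M :: ('a, 'w) emodel. wf_model M \<longrightarrow> (\<forall>x\<in>W M. sat M x \<phi>))"

end

theory Submission
  imports Defs
begin

text \<open>Every non-tautological clause D is falsified by the valuation that forgetting imposes on the
  copy of a world labelled by D; so a copy labelled by a member of \<open>Cl \<pi>\<close> refutes \<pi>, and one
  labelled by a member of \<open>Cl (\<not>\<pi>)\<close> verifies it. Both sets are nonempty when \<pi> is contingent.
  After forgetting whether \<pi>, every successor of the actual world therefore has one copy refuting
  and one verifying \<pi>, so \<open>\<box>\<not>\<pi> \<or> \<box>\<pi>\<close> holds exactly when there are no successors at all.\<close>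

primrec patoms :: "'a pform \<Rightarrow> 'a set" where
  "patoms PTop = {}"
| "patoms (PAtom p) = {p}"
| "patoms (PNeg a) = patoms a"
| "patoms (PConj a b) = patoms a \<union> patoms b"

lemma finite_patoms: "finite (patoms \<phi>)"
  by (induction \<phi>) auto

lemma peval_cong: "(\<And>p. p \<in> patoms \<phi> \<Longrightarrow> v p = u p) \<Longrightarrow> peval v \<phi> = peval u \<phi>"
  by (induction \<phi>) auto

definition refuting_clause :: "('a \<Rightarrow> bool) \<Rightarrow> 'a set \<Rightarrow> 'a lit set" where
  "refuting_clause v A = (\<lambda>p. if v p then NegL p else Pos p) ` A"

lemma not_tautological_refuting_clause: "\<not> tautological (refuting_clause v A)"
  unfolding refuting_clause_def tautological_def by (auto split: if_splits)

lemma entails_refuting_clause: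
  assumes "\<not> peval v \<phi>"
  shows "entails_clause \<phi> (refuting_clause v (patoms \<phi>))"
  unfolding entails_clause_def
proof (intro allI impI)
  fix u assume "peval u \<phi>"
  with assms have "\<exists>p\<in>patoms \<phi>. u p \<noteq> v p"
    using peval_cong[of \<phi> u v] by blast
  then show "ceval u (refuting_clause v (patoms \<phi>))"
    unfolding ceval_def refuting_clause_def by force
qed

lemma minimal_entailed_subclause:
  assumes "finite D0" "\<not> tautological D0" "entails_clause \<phi> D0"
  obtains D where "D \<subseteq> D0" "D \<in> Cl \<phi>"
proof -
  let ?S = "{D. D \<subseteq> D0 \<and> entails_clause \<phi> D}"
  have fin: "finite ?S"
    using assms(1) by (simp add: finite_subset[of _ "Pow D0"])
  have ne: "?S \<noteq> {}" using assms(3) by blast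
  obtain D where "D \<in> ?S" and min: "\<forall>D'\<in>?S. D' \<subseteq> D \<longrightarrow> D = D'"
    using finite_has_minimal[OF fin ne] by (elim bexE)
  then have D: "D \<subseteq> D0" "entails_clause \<phi> D" by simp_all
  have "finite D" using D(1) assms(1) by (rule finite_subset)
  moreover have "\<not> tautological D"
    using D(1) assms(2) unfolding tautological_def by blast
  moreover have "\<not> entails_clause \<phi> D'" if "D' \<subset> D" for D'
    using that D(1) min by blast
  ultimately have "D \<in> Cl \<phi>" unfolding Cl_def using D(2) by blast
  with D(1) that show ?thesis by blast
qed

lemma Cl_nonempty:
  assumes "\<not> ptaut \<phi>"
  shows "Cl \<phi> \<noteq> {}"
proof -
  obtain v where v: "\<not> peval v \<phi>" using assms unfolding ptaut_def by blast
  have "finite (refuting_clause v (patoms \<phi>))"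
    unfolding refuting_clause_def using finite_patoms by blast
  then obtain D where "D \<in> Cl \<phi>"
    using minimal_entailed_subclause not_tautological_refuting_clause entails_refuting_clause[OF v]
    by metis
  then show ?thesis by blast
qed

definition forget_val :: "'a lit set \<Rightarrow> ('a \<Rightarrow> bool) \<Rightarrow> 'a \<Rightarrow> bool" where
  "forget_val D b p \<longleftrightarrow> NegL p \<in> D \<or> (Pos p \<notin> D \<and> NegL p \<notin> D \<and> b p)"

lemma not_ceval_forget_val:
  assumes "\<not> tautological D"
  shows "\<not> ceval (forget_val D b) D"
proof -
  have "\<not> leval (forget_val D b) l" if "l \<in> D" for l
    using assms that by (cases l) (auto simp: forget_val_def tautological_def)
  then show ?thesis unfolding ceval_def by blast
qed

lemma Cl_refuted_by_forget_val: "D \<in> Cl \<phi> \<Longrightarrow> \<not> peval (forget_val D b) \<phi>"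
  using not_ceval_forget_val unfolding Cl_def entails_clause_def by blast

lemma upd_R_from_Cons:
  "((w, i # is), y) \<in> R (upd M D I) \<longleftrightarrow>
     (\<exists>v j js. y = (v, j # js) \<and> ((w, is), (v, js)) \<in> R M \<and> i \<in> insert 0 I \<and> j \<in> insert 0 I)"
  unfolding upd_def by auto

lemma upd_V_copy:
  assumes "(v, js) \<in> W M" "i \<in> I" "i \<noteq> 0"
  shows "(\<lambda>p. (v, i # js) \<in> V (upd M D I) p) = forget_val (D i) (\<lambda>p. (v, js) \<in> V M p)"
  using assms unfolding upd_def forget_val_def by auto

lemma sat_emb: "sat M x (emb \<phi>) = peval (\<lambda>p. x \<in> V M p) \<phi>"
  by (induction \<phi>) auto

lemma sat_Or [simp]: "sat M x (Or a b) \<longleftrightarrow> sat M x a \<or> sat M x b"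
  by (simp add: Or_def)

lemma sat_Iff [simp]: "sat M x (Iff a b) \<longleftrightarrow> (sat M x a \<longleftrightarrow> sat M x b)"
  by (auto simp: Iff_def Imp_def)

lemma sat_Box_Bot: "sat M x (Box Bot) \<longleftrightarrow> (\<forall>y. (x, y) \<notin> R M)"
  by (simp add: Bot_def)

lemma sat_forget_box_dichotomy:
  assumes wf: "wf_model M" and Cl: "Cl \<pi> \<noteq> {}" "Cl (PNeg \<pi>) \<noteq> {}"
  shows "sat M x (Forget \<pi> (Or (Box (Neg (emb \<pi>))) (Box (emb \<pi>)))) \<longleftrightarrow> (\<forall>y. (x, y) \<notin> R M)"
proof
  assume "\<forall>y. (x, y) \<notin> R M"
  then show "sat M x (Forget \<pi> (Or (Box (Neg (emb \<pi>))) (Box (emb \<pi>))))"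
    by (cases x) (auto simp: upd_R_from_Cons)
next
  assume "sat M x (Forget \<pi> (Or (Box (Neg (emb \<pi>))) (Box (emb \<pi>))))"
  then have forget: "sat (upd M (\<lambda>i. if i = 1 then D1 else D2) {1, 2}) (fst x, 0 # snd x)
                       (Or (Box (Neg (emb \<pi>))) (Box (emb \<pi>)))"
    if "D1 \<in> Cl \<pi>" "D2 \<in> Cl (PNeg \<pi>)" for D1 D2
    using that by simp
  show "\<forall>y. (x, y) \<notin> R M"
  proof (intro allI notI)
    fix y assume xy: "(x, y) \<in> R M"
    obtain w "is" v js where x: "x = (w, is)" and y: "y = (v, js)" by fastforce
    have vW: "(v, js) \<in> W M" using wf xy y unfolding wf_model_def by blast
    obtain D1 D2 where D1: "D1 \<in> Cl \<pi>" and D2: "D2 \<in> Cl (PNeg \<pi>)" using Cl by blast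
    let ?N = "upd M (\<lambda>i. if i = 1 then D1 else D2) {1, 2}"
    let ?b = "\<lambda>p. (v, js) \<in> V M p"
    have "\<not> sat ?N (v, 1 # js) (emb \<pi>)"
      using upd_V_copy[OF vW, of 1] Cl_refuted_by_forget_val[OF D1, of ?b] by (simp add: sat_emb)
    moreover have "sat ?N (v, 2 # js) (emb \<pi>)"
      using upd_V_copy[OF vW, of 2] Cl_refuted_by_forget_val[OF D2, of ?b] by (simp add: sat_emb)
    moreover have "((w, 0 # is), (v, i # js)) \<in> R ?N" if "i \<in> {1, 2}" for i
      using xy x y that by (simp add: upd_R_from_Cons)
    ultimately show False using forget[OF D1 D2] x by auto
  qed
qed

theorem proposition1:
  fixes \<pi> :: "'a::countable pform"
  assumes "\<not> ptaut \<pi>" and "\<not> pcontra \<pi>"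
  shows "valid (Iff (Forget \<pi> (Or (Box (Neg (emb \<pi>))) (Box (emb \<pi>)))) (Box Bot)) TYPE('w)"
proof -
  have "\<not> ptaut (PNeg \<pi>)" using assms(2) unfolding ptaut_def pcontra_def by simp
  then have Cl: "Cl \<pi> \<noteq> {}" "Cl (PNeg \<pi>) \<noteq> {}" using Cl_nonempty assms(1) by auto
  show ?thesis
    unfolding valid_def sat_Iff sat_Box_Bot
    by (intro allI impI ballI) (rule sat_forget_box_dichotomy[OF _ Cl])
qed

end
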